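(* For every $\theta\in[0,\infty)$, the Beta distribution $\mathrm{Beta}(1,\theta)$ is the unique invariant distribution of the Feller process on $[0,1]$ generated by $A_\theta$, where $\mathrm{Beta}(1,0)$ is interpreted as the Dirac mass $\delta_1$.
   Context: $A_\theta h(z)=z(1-z)h''(z)+(2-(2+\theta)z)h'(z)+\theta(h(0)-h(z))$ for $h\in C^2([0,1])$; it describes a diffusion on $[0,1]$ with additional jumps to $0$ at rate $\theta$. $\mathrm{Beta}(1,\theta)$ for $\theta>0$ has density $\theta(1-z)^{\theta-1}$ on $[0,1]$. *)

theory Defs
  imports "HOL-Probability.Probability"
begin

text \<open>Functions on [0,1] are represented as real \<Rightarrow> real; only values on {0..1} matter.\<close>

definition sup_dist01 :: "(real \<Rightarrow> real) \<Rightarrow> (real \<Rightarrow> real) \<Rightarrow> real" where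
  "sup_dist01 f g = (SUP x\<in>{0..1}. \<bar>f x - g x\<bar>)"

definition C2_01 :: "(real \<Rightarrow> real) \<Rightarrow> (real \<Rightarrow> real) \<Rightarrow> (real \<Rightarrow> real) \<Rightarrow> bool" where
  "C2_01 h h1 h2 \<longleftrightarrow>
     continuous_on {0..1} h2 \<and>
     (\<forall>x\<in>{0..1}. (h has_real_derivative h1 x) (at x within {0..1})) \<and>
     (\<forall>x\<in>{0..1}. (h1 has_real_derivative h2 x) (at x within {0..1}))"

definition A_op :: "real \<Rightarrow> (real \<Rightarrow> real) \<Rightarrow> (real \<Rightarrow> real) \<Rightarrow> (real \<Rightarrow> real) \<Rightarrow> real \<Rightarrow> real" where
  "A_op \<theta> h h1 h2 z = z * (1 - z) * h2 z + (2 - (2 + \<theta>) * z) * h1 z + \<theta> * (h 0 - h z)"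

definition feller_semigroup01 :: "(real \<Rightarrow> (real \<Rightarrow> real) \<Rightarrow> (real \<Rightarrow> real)) \<Rightarrow> bool" where
  "feller_semigroup01 T \<longleftrightarrow>
     (\<forall>t\<ge>0. \<forall>f. continuous_on {0..1} f \<longrightarrow> continuous_on {0..1} (T t f)) \<and>
     (\<forall>f. \<forall>x\<in>{0..1}. T 0 f x = f x) \<and>
     (\<forall>s\<ge>0. \<forall>t\<ge>0. \<forall>f. continuous_on {0..1} f \<longrightarrow>
        (\<forall>x\<in>{0..1}. T (s + t) f x = T s (T t f) x)) \<and>
     (\<forall>t\<ge>0. \<forall>f g a b. continuous_on {0..1} f \<longrightarrow> continuous_on {0..1} g \<longrightarrow>
        (\<forall>x\<in>{0..1}. T t (\<lambda>y. a * f y + b * g y) x = a * T t f x + b * T t g x)) \<and>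
     (\<forall>t\<ge>0. \<forall>f. continuous_on {0..1} f \<longrightarrow> (\<forall>x\<in>{0..1}. f x \<ge> 0) \<longrightarrow>
        (\<forall>x\<in>{0..1}. T t f x \<ge> 0)) \<and>
     (\<forall>t\<ge>0. \<forall>x\<in>{0..1}. T t (\<lambda>_. 1) x = 1) \<and>
     (\<forall>f. continuous_on {0..1} f \<longrightarrow>
        ((\<lambda>t. sup_dist01 (T t f) f) \<longlongrightarrow> 0) (at_right 0))"

definition generated_by_A :: "real \<Rightarrow> (real \<Rightarrow> (real \<Rightarrow> real) \<Rightarrow> (real \<Rightarrow> real)) \<Rightarrow> bool" where
  "generated_by_A \<theta> T \<longleftrightarrow> feller_semigroup01 T \<and>
     (\<forall>h h1 h2. C2_01 h h1 h2 \<longrightarrow>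
        ((\<lambda>t. sup_dist01 (\<lambda>x. (T t h x - h x) / t) (A_op \<theta> h h1 h2)) \<longlongrightarrow> 0) (at_right 0))"

text \<open>Probability distributions on [0,1], viewed as Borel measures on the reals.\<close>
definition dist01 :: "real measure \<Rightarrow> bool" where
  "dist01 M \<longleftrightarrow> prob_space M \<and> sets M = sets borel \<and> emeasure M {0..1} = 1"

definition invariant_dist :: "(real \<Rightarrow> (real \<Rightarrow> real) \<Rightarrow> (real \<Rightarrow> real)) \<Rightarrow> real measure \<Rightarrow> bool" where
  "invariant_dist T M \<longleftrightarrow> dist01 M \<and>
     (\<forall>t\<ge>0. \<forall>f. continuous_on {0..1} f \<longrightarrow>
        (LINT x:{0..1}|M. T t f x) = (LINT x:{0..1}|M. f x))"

definition beta1 :: "real \<Rightarrow> real measure" where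
  "beta1 \<theta> = (if \<theta> = 0 then return borel 1
     else density lborel (\<lambda>z. ennreal (indicator {0..1} z * (\<theta> * (1 - z) powr (\<theta> - 1)))))"

end

theory Submission
  imports Defs
begin

text \<open>
  For \<open>h(z) = z^(n+1)\<close> one computes \<open>A\<^sub>\<theta> h = (n+2)(n+1) z^n - (n+2)(n+1+\<theta>) z^(n+1)\<close>.
  If \<open>M\<close> is invariant, then \<open>\<integral> A\<^sub>\<theta> h dM\<close> is the limit of \<open>(\<integral> T\<^sub>s h dM - \<integral> h dM)/s = 0\<close>,
  so the moments \<open>m\<^sub>n = \<integral> z^n dM\<close> satisfy \<open>(n+1+\<theta>) m\<^sub>n\<^sub>+\<^sub>1 = (n+1) m\<^sub>n\<close> and \<open>m\<^sub>0 = 1\<close>.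
  This recursion fixes all moments, and the moments determine a distribution on \<open>[0,1]\<close>
  because polynomials are dense in \<open>C([0,1])\<close>. Conversely, if the moments of \<open>M\<close> obey the
  recursion, then by induction on \<open>n\<close> the function \<open>\<psi>(u) = \<integral> T\<^sub>u z^(n+1) dM - m\<^sub>n\<^sub>+\<^sub>1\<close> solves
  \<open>\<psi>' = -(n+2)(n+1+\<theta>) \<psi>\<close> with \<open>\<psi>(0) = 0\<close>, hence vanishes; so \<open>\<integral> T\<^sub>u p dM = \<integral> p dM\<close>
  for polynomials \<open>p\<close> and, by density, for all continuous functions. Integrating by parts
  shows that \<open>Beta(1,\<theta>)\<close> obeys the recursion; for \<open>\<theta> = 0\<close> all moments of \<open>\<delta>\<^sub>1\<close> are \<open>1\<close>.
\<close>

lemma sup_dist01_upper: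
  assumes "continuous_on {0..1} f" "continuous_on {0..1} g" "x \<in> {0..1}"
  shows "\<bar>f x - g x\<bar> \<le> sup_dist01 f g"
proof -
  have "compact ((\<lambda>x. \<bar>f x - g x\<bar>) ` {0..1})"
    using assms by (intro compact_continuous_image continuous_intros) auto
  then have "bdd_above ((\<lambda>x. \<bar>f x - g x\<bar>) ` {0..1})"
    by (intro bounded_imp_bdd_above compact_imp_bounded)
  then show ?thesis
    unfolding sup_dist01_def using assms(3) by (rule cSUP_upper2) auto
qed

lemma at_right_0_tendsto_zeroE:
  fixes f :: "real \<Rightarrow> real"
  assumes "(f \<longlongrightarrow> 0) (at_right 0)" "e > 0"
  obtains b where "b > 0" "\<And>s. 0 < s \<Longrightarrow> s < b \<Longrightarrow> f s < e"
  using order_tendstoD(2)[OF assms] unfolding eventually_at_right_field by auto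

definition linear_contraction01 :: "((real \<Rightarrow> real) \<Rightarrow> real) \<Rightarrow> bool" where
  "linear_contraction01 \<Phi> \<longleftrightarrow>
     (\<forall>f g a b. continuous_on {0..1} f \<longrightarrow> continuous_on {0..1} g \<longrightarrow>
        \<Phi> (\<lambda>x. a * f x + b * g x) = a * \<Phi> f + b * \<Phi> g) \<and>
     (\<forall>f B. continuous_on {0..1} f \<longrightarrow> (\<forall>x\<in>{0..1}. \<bar>f x\<bar> \<le> B) \<longrightarrow> \<bar>\<Phi> f\<bar> \<le> B)"

context
  fixes \<Phi> :: "(real \<Rightarrow> real) \<Rightarrow> real"
  assumes \<Phi>: "linear_contraction01 \<Phi>"
begin

lemma linear_contraction01_lincomb:
  "continuous_on {0..1} f \<Longrightarrow> continuous_on {0..1} g \<Longrightarrow>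
     \<Phi> (\<lambda>x. a * f x + b * g x) = a * \<Phi> f + b * \<Phi> g"
  using \<Phi> unfolding linear_contraction01_def by simp

lemma linear_contraction01_bound:
  "continuous_on {0..1} f \<Longrightarrow> (\<And>x. x \<in> {0..1} \<Longrightarrow> \<bar>f x\<bar> \<le> B) \<Longrightarrow> \<bar>\<Phi> f\<bar> \<le> B"
  using \<Phi> unfolding linear_contraction01_def by (simp add: Ball_def)

lemma linear_contraction01_diff:
  assumes "continuous_on {0..1} f" "continuous_on {0..1} g"
  shows "\<Phi> (\<lambda>x. f x - g x) = \<Phi> f - \<Phi> g"
  using linear_contraction01_lincomb[OF assms, of 1 "-1"] by simp

lemma linear_contraction01_cmult:
  assumes "continuous_on {0..1} f"
  shows "\<Phi> (\<lambda>x. c * f x) = c * \<Phi> f"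
  using linear_contraction01_lincomb[OF assms assms, of c 0] by simp

lemma linear_contraction01_polynomial:
  "\<Phi> (\<lambda>x. \<Sum>i\<le>N. a i * x ^ i) = (\<Sum>i\<le>N. a i * \<Phi> (\<lambda>x. x ^ i))"
proof (induction N)
  case 0
  have "continuous_on {0..1} (\<lambda>x::real. x ^ 0)" by simp
  from linear_contraction01_cmult[OF this, of "a 0"] show ?case by simp
next
  case (Suc N)
  have "continuous_on {0..1} (\<lambda>x::real. \<Sum>i\<le>N. a i * x ^ i)" "continuous_on {0..1} (\<lambda>x::real. x ^ Suc N)"
    by (intro continuous_intros)+
  from linear_contraction01_lincomb[OF this, of 1 "a (Suc N)"] show ?case
    using Suc.IH by simp
qed

end

lemma linear_contraction01_eqI:
  assumes \<Phi>: "linear_contraction01 \<Phi>" and \<Psi>: "linear_contraction01 \<Psi>"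
    and powers: "\<And>n. \<Phi> (\<lambda>x. x ^ n) = \<Psi> (\<lambda>x. x ^ n)"
    and f: "continuous_on {0..1} f"
  shows "\<Phi> f = \<Psi> f"
proof -
  have "\<bar>\<Phi> f - \<Psi> f\<bar> \<le> 0 + e" if e: "e > 0" for e
  proof -
    obtain p where p: "real_polynomial_function p" "\<And>x. x \<in> {0..1} \<Longrightarrow> \<bar>f x - p x\<bar> < e / 2"
      using Stone_Weierstrass_real_polynomial_function[OF compact_Icc f, of "e / 2"] e by auto
    obtain a N where p_eq: "p = (\<lambda>x. \<Sum>i\<le>N. a i * x ^ i)"
      using p(1) real_polynomial_function_iff_sum by blast
    have p_cont: "continuous_on {0..1} p" unfolding p_eq by (intro continuous_intros)
    have "\<Phi> p = \<Psi> p"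
      unfolding p_eq linear_contraction01_polynomial[OF \<Phi>] linear_contraction01_polynomial[OF \<Psi>]
      using powers by simp
    moreover have approx: "\<bar>\<Xi> f - \<Xi> p\<bar> \<le> e / 2" if \<Xi>: "linear_contraction01 \<Xi>" for \<Xi>
    proof -
      have "\<bar>\<Xi> (\<lambda>x. f x - p x)\<bar> \<le> e / 2"
        using f p_cont p(2) by (intro linear_contraction01_bound[OF \<Xi>] continuous_intros) force+
      then show ?thesis using linear_contraction01_diff[OF \<Xi> f p_cont] by simp
    qed
    ultimately show ?thesis using approx[OF \<Phi>] approx[OF \<Psi>] by linarith
  qed
  then have "\<bar>\<Phi> f - \<Psi> f\<bar> \<le> 0" by (rule field_le_epsilon)
  then show ?thesis by simp
qed

lemma dist01_sets_Icc: "dist01 M \<Longrightarrow> {0..1} \<in> sets M"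
  unfolding dist01_def by simp

lemma dist01_set_integrable:
  fixes f :: "real \<Rightarrow> real"
  assumes M: "dist01 M" and f: "continuous_on {0..1} f"
  shows "set_integrable M {0..1} f"
proof -
  interpret prob_space M using M unfolding dist01_def by blast
  have sets_M: "sets M = sets borel" using M unfolding dist01_def by blast
  obtain B where B: "\<And>x. x \<in> {0..1} \<Longrightarrow> norm (f x) \<le> B"
    using compact_imp_bounded[OF compact_continuous_image[OF f compact_Icc]]
    unfolding bounded_iff by fastforce
  have "(\<lambda>x. indicator {0..1} x *\<^sub>R f x) \<in> borel_measurable M"
    using borel_measurable_continuous_on_indicator[OF _ f] measurable_cong_sets[OF sets_M refl]
    by auto
  moreover have "norm (indicator {0..1} x *\<^sub>R f x) \<le> max 0 B" for x
    using B[of x] by (cases "x \<in> {0..1}") auto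
  ultimately show ?thesis
    unfolding set_integrable_def by (intro integrable_const_bound) auto
qed

lemma dist01_set_integral_const: "dist01 M \<Longrightarrow> (LINT x:{0..1}|M. c) = c"
  unfolding dist01_def set_lebesgue_integral_def
  by (simp add: measure_def)

lemma linear_contraction01_set_integral:
  assumes M: "dist01 M"
  shows "linear_contraction01 (\<lambda>f. LINT x:{0..1}|M. f x)"
  unfolding linear_contraction01_def
proof (intro conjI allI impI)
  fix f g :: "real \<Rightarrow> real" and a b :: real
  assume "continuous_on {0..1} f" "continuous_on {0..1} g"
  then show "(LINT x:{0..1}|M. a * f x + b * g x) = a * (LINT x:{0..1}|M. f x) + b * (LINT x:{0..1}|M. g x)"
    using M by (simp add: dist01_set_integrable)
next
  fix f :: "real \<Rightarrow> real" and B :: real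
  assume f: "continuous_on {0..1} f" and B: "\<forall>x\<in>{0..1}. \<bar>f x\<bar> \<le> B"
  have "(LINT x:{0..1}|M. - B) \<le> (LINT x:{0..1}|M. f x)" "(LINT x:{0..1}|M. f x) \<le> (LINT x:{0..1}|M. B)"
    using M f B by (intro set_integral_mono dist01_set_integrable continuous_intros; force)+
  then show "\<bar>LINT x:{0..1}|M. f x\<bar> \<le> B"
    unfolding dist01_set_integral_const[OF M] by linarith
qed

context
  fixes T :: "real \<Rightarrow> (real \<Rightarrow> real) \<Rightarrow> (real \<Rightarrow> real)"
  assumes feller: "feller_semigroup01 T"
begin

lemma feller_continuous: "t \<ge> 0 \<Longrightarrow> continuous_on {0..1} f \<Longrightarrow> continuous_on {0..1} (T t f)"
  using feller unfolding feller_semigroup01_def by simp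

lemma feller_zero: "x \<in> {0..1} \<Longrightarrow> T 0 f x = f x"
  using feller unfolding feller_semigroup01_def by simp

lemma feller_add: "s \<ge> 0 \<Longrightarrow> t \<ge> 0 \<Longrightarrow> continuous_on {0..1} f \<Longrightarrow> x \<in> {0..1} \<Longrightarrow>
    T (s + t) f x = T s (T t f) x"
  using feller unfolding feller_semigroup01_def by simp

lemma feller_lincomb: "t \<ge> 0 \<Longrightarrow> continuous_on {0..1} f \<Longrightarrow> continuous_on {0..1} g \<Longrightarrow>
    x \<in> {0..1} \<Longrightarrow> T t (\<lambda>y. a * f y + b * g y) x = a * T t f x + b * T t g x"
  using feller unfolding feller_semigroup01_def by simp

lemma feller_nonneg: "t \<ge> 0 \<Longrightarrow> continuous_on {0..1} f \<Longrightarrow> (\<And>y. y \<in> {0..1} \<Longrightarrow> f y \<ge> 0) \<Longrightarrow>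
    x \<in> {0..1} \<Longrightarrow> T t f x \<ge> 0"
  using feller unfolding feller_semigroup01_def by simp

lemma feller_const_one: "t \<ge> 0 \<Longrightarrow> x \<in> {0..1} \<Longrightarrow> T t (\<lambda>_. 1) x = 1"
  using feller unfolding feller_semigroup01_def by simp

lemma feller_strongly_continuous:
  "continuous_on {0..1} f \<Longrightarrow> ((\<lambda>t. sup_dist01 (T t f) f) \<longlongrightarrow> 0) (at_right 0)"
  using feller unfolding feller_semigroup01_def by simp

lemma feller_abs_le:
  assumes t: "t \<ge> 0" and f: "continuous_on {0..1} f" and x: "x \<in> {0..1}"
    and B: "\<And>y. y \<in> {0..1} \<Longrightarrow> \<bar>f y\<bar> \<le> B"
  shows "\<bar>T t f x\<bar> \<le> B"
proof -
  have one: "continuous_on {0..1} (\<lambda>_::real. 1::real)" by simp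
  have "T t (\<lambda>y. B * 1 + 1 * f y) x \<ge> 0" "T t (\<lambda>y. B * 1 + (-1) * f y) x \<ge> 0"
    using f B by (intro feller_nonneg[OF t _ _ x] continuous_intros; force)+
  then show ?thesis
    unfolding feller_lincomb[OF t one f x] feller_const_one[OF t x] by linarith
qed

lemma linear_contraction01_feller_integral:
  assumes M: "dist01 M" and t: "t \<ge> 0"
  shows "linear_contraction01 (\<lambda>f. LINT x:{0..1}|M. T t f x)"
  unfolding linear_contraction01_def
proof (intro conjI allI impI)
  fix f g :: "real \<Rightarrow> real" and a b :: real
  assume f: "continuous_on {0..1} f" and g: "continuous_on {0..1} g"
  have "(LINT x:{0..1}|M. T t (\<lambda>y. a * f y + b * g y) x) = (LINT x:{0..1}|M. a * T t f x + b * T t g x)"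
    using feller_lincomb[OF t f g] by (intro set_lebesgue_integral_cong dist01_sets_Icc M) auto
  also have "\<dots> = a * (LINT x:{0..1}|M. T t f x) + b * (LINT x:{0..1}|M. T t g x)"
    by (rule linear_contraction01_lincomb[OF linear_contraction01_set_integral[OF M]])
      (use feller_continuous t f g in auto)
  finally show "(LINT x:{0..1}|M. T t (\<lambda>y. a * f y + b * g y) x) =
      a * (LINT x:{0..1}|M. T t f x) + b * (LINT x:{0..1}|M. T t g x)" .
next
  fix f :: "real \<Rightarrow> real" and B :: real
  assume "continuous_on {0..1} f" "\<forall>x\<in>{0..1}. \<bar>f x\<bar> \<le> B"
  then show "\<bar>LINT x:{0..1}|M. T t f x\<bar> \<le> B"
    using t by (intro linear_contraction01_bound[OF linear_contraction01_set_integral[OF M]]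
        feller_continuous feller_abs_le) auto
qed

context
  fixes M :: "real measure"
  assumes M: "dist01 M"
begin

lemma feller_integral_semigroup:
  assumes "u \<ge> 0" "s \<ge> 0" "continuous_on {0..1} h"
  shows "(LINT x:{0..1}|M. T u (T s h) x) = (LINT x:{0..1}|M. T (u + s) h x)"
  using feller_add[OF assms] by (intro set_lebesgue_integral_cong dist01_sets_Icc M) auto

lemma feller_integral_forward_quotient:
  assumes u: "u \<ge> 0" and s: "s > 0" and h: "continuous_on {0..1} h" and g: "continuous_on {0..1} g"
  shows "\<bar>((LINT x:{0..1}|M. T (u + s) h x) - (LINT x:{0..1}|M. T u h x)) / s - (LINT x:{0..1}|M. T u g x)\<bar>
    \<le> sup_dist01 (\<lambda>x. (T s h x - h x) / s) g"
proof -
  let ?\<Phi> = "\<lambda>f. LINT x:{0..1}|M. T u f x"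
  have \<Phi>: "linear_contraction01 ?\<Phi>" by (rule linear_contraction01_feller_integral[OF M u])
  have Tsh: "continuous_on {0..1} (T s h)" using feller_continuous s h by simp
  have quot: "continuous_on {0..1} (\<lambda>x. (T s h x - h x) / s)"
    using Tsh h s by (intro continuous_intros) auto
  have "?\<Phi> (\<lambda>x. (1 / s) * (T s h x - h x) - g x) = ?\<Phi> (\<lambda>x. (1 / s) * (T s h x - h x)) - ?\<Phi> g"
    using Tsh h g by (intro linear_contraction01_diff[OF \<Phi>] continuous_intros)
  moreover have "?\<Phi> (\<lambda>x. (1 / s) * (T s h x - h x)) = (1 / s) * ?\<Phi> (\<lambda>x. T s h x - h x)"
    using Tsh h by (intro linear_contraction01_cmult[OF \<Phi>] continuous_intros)
  moreover have "?\<Phi> (\<lambda>x. T s h x - h x) = ?\<Phi> (T s h) - ?\<Phi> h"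
    by (rule linear_contraction01_diff[OF \<Phi> Tsh h])
  ultimately have eq: "?\<Phi> (\<lambda>x. (T s h x - h x) / s - g x) =
      ((LINT x:{0..1}|M. T (u + s) h x) - ?\<Phi> h) / s - ?\<Phi> g"
    using feller_integral_semigroup[OF u _ h, of s] s by simp
  have "\<bar>?\<Phi> (\<lambda>x. (T s h x - h x) / s - g x)\<bar> \<le> sup_dist01 (\<lambda>x. (T s h x - h x) / s) g"
    using quot g sup_dist01_upper[OF quot g] by (intro linear_contraction01_bound[OF \<Phi>] continuous_on_diff) auto
  then show ?thesis unfolding eq .
qed

lemma feller_integral_shift:
  assumes u: "u \<ge> 0" and s: "s \<ge> 0" and g: "continuous_on {0..1} g"
  shows "\<bar>(LINT x:{0..1}|M. T (u + s) g x) - (LINT x:{0..1}|M. T u g x)\<bar> \<le> sup_dist01 (T s g) g"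
proof -
  let ?\<Phi> = "\<lambda>f. LINT x:{0..1}|M. T u f x"
  have \<Phi>: "linear_contraction01 ?\<Phi>" by (rule linear_contraction01_feller_integral[OF M u])
  have Tsg: "continuous_on {0..1} (T s g)" using feller_continuous s g by simp
  have "\<bar>?\<Phi> (\<lambda>x. T s g x - g x)\<bar> \<le> sup_dist01 (T s g) g"
    using Tsg g sup_dist01_upper[OF Tsg g]
    by (intro linear_contraction01_bound[OF \<Phi>] continuous_intros) auto
  then show ?thesis
    using linear_contraction01_diff[OF \<Phi> Tsg g] feller_integral_semigroup[OF u s g] by simp
qed

lemma feller_integral_has_derivative:
  assumes h: "continuous_on {0..1} h" and g: "continuous_on {0..1} g"
    and gen: "((\<lambda>s. sup_dist01 (\<lambda>x. (T s h x - h x) / s) g) \<longlongrightarrow> 0) (at_right 0)"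
    and t: "t \<ge> 0"
  shows "((\<lambda>u. LINT x:{0..1}|M. T u h x) has_real_derivative (LINT x:{0..1}|M. T t g x))
           (at t within {0..})"
proof -
  define \<phi> where "\<phi> u = (LINT x:{0..1}|M. T u h x)" for u
  define \<gamma> where "\<gamma> u = (LINT x:{0..1}|M. T u g x)" for u
  have "\<exists>d>0. \<forall>y\<in>{0..}. y \<noteq> t \<and> dist y t < d \<longrightarrow> dist ((\<phi> y - \<phi> t) / (y - t)) (\<gamma> t) < e"
    if e: "e > 0" for e
  proof -
    obtain b1 where b1: "b1 > 0" "\<And>s. 0 < s \<Longrightarrow> s < b1 \<Longrightarrow> sup_dist01 (\<lambda>x. (T s h x - h x) / s) g < e / 2"
      using at_right_0_tendsto_zeroE[OF gen] e by (metis half_gt_zero)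
    obtain b2 where b2: "b2 > 0" "\<And>s. 0 < s \<Longrightarrow> s < b2 \<Longrightarrow> sup_dist01 (T s g) g < e / 2"
      using at_right_0_tendsto_zeroE[OF feller_strongly_continuous[OF g]] e by (metis half_gt_zero)
    have "dist ((\<phi> y - \<phi> t) / (y - t)) (\<gamma> t) < e" if y: "y \<ge> 0" "y \<noteq> t" "\<bar>y - t\<bar> < min b1 b2" for y
    proof (cases "t < y")
      case True
      then show ?thesis
        using feller_integral_forward_quotient[OF t _ h g, of "y - t"] b1(2)[of "y - t"] y e
        unfolding \<phi>_def \<gamma>_def dist_real_def by auto
    next
      case False
      then have "y < t" using y by simp
      then have "\<bar>(\<phi> t - \<phi> y) / (t - y) - \<gamma> y\<bar> < e / 2" "\<bar>\<gamma> t - \<gamma> y\<bar> < e / 2"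
        using feller_integral_forward_quotient[OF y(1) _ h g, of "t - y"] b1(2)[of "t - y"]
          feller_integral_shift[OF y(1) _ g, of "t - y"] b2(2)[of "t - y"] y
        unfolding \<phi>_def \<gamma>_def by auto
      moreover have "(\<phi> y - \<phi> t) / (y - t) = (\<phi> t - \<phi> y) / (t - y)"
        by (metis minus_diff_eq minus_divide_divide)
      ultimately show ?thesis unfolding dist_real_def by linarith
    qed
    then show ?thesis using b1(1) b2(1) by (intro exI[of _ "min b1 b2"]) (auto simp: dist_real_def)
  qed
  then show ?thesis
    unfolding has_field_derivative_iff tendsto_iff eventually_at \<phi>_def \<gamma>_def by blast
qed

end

end

definition moment :: "real measure \<Rightarrow> nat \<Rightarrow> real" where
  "moment M n = (LINT x:{0..1}|M. x ^ n)"

definition moment_recursion :: "real \<Rightarrow> real measure \<Rightarrow> bool" where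
  "moment_recursion \<theta> M \<longleftrightarrow>
     (\<forall>n. (real (Suc n) + \<theta>) * moment M (Suc n) = real (Suc n) * moment M n)"

lemma C2_01_continuous:
  assumes "C2_01 h h1 h2"
  shows "continuous_on {0..1} h" "continuous_on {0..1} h1" "continuous_on {0..1} h2"
  using assms unfolding C2_01_def continuous_on_eq_continuous_within
  by (auto intro: DERIV_continuous)

lemma C2_01_power:
  "C2_01 (\<lambda>z. z ^ Suc n) (\<lambda>z. real (Suc n) * z ^ n) (\<lambda>z. real (Suc n) * (real n * z ^ (n - 1)))"
  unfolding C2_01_def
  by (auto intro!: continuous_intros DERIV_cmult DERIV_pow[of "Suc n", simplified] DERIV_pow)

lemma A_op_power:
  "A_op \<theta> (\<lambda>z. z ^ Suc n) (\<lambda>z. real (Suc n) * z ^ n) (\<lambda>z. real (Suc n) * (real n * z ^ (n - 1))) =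
    (\<lambda>z. (real n + 2) * (real n + 1) * z ^ n - (real n + 2) * (real n + 1 + \<theta>) * z ^ Suc n)"
proof
  fix z :: real
  have "z * (1 - z) * (real (Suc n) * (real n * z ^ (n - 1))) = real (Suc n) * real n * (z ^ n - z ^ Suc n)"
    by (cases n) (auto simp: algebra_simps)
  then show "A_op \<theta> (\<lambda>z. z ^ Suc n) (\<lambda>z. real (Suc n) * z ^ n) (\<lambda>z. real (Suc n) * (real n * z ^ (n - 1))) z =
      (real n + 2) * (real n + 1) * z ^ n - (real n + 2) * (real n + 1 + \<theta>) * z ^ Suc n"
    unfolding A_op_def by (simp add: algebra_simps)
qed

lemma generated_by_A_feller: "generated_by_A \<theta> T \<Longrightarrow> feller_semigroup01 T"
  unfolding generated_by_A_def by simp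

lemma generated_by_A_tendsto:
  "generated_by_A \<theta> T \<Longrightarrow> C2_01 h h1 h2 \<Longrightarrow>
    ((\<lambda>t. sup_dist01 (\<lambda>x. (T t h x - h x) / t) (A_op \<theta> h h1 h2)) \<longlongrightarrow> 0) (at_right 0)"
  unfolding generated_by_A_def by simp

lemma invariant_integral_A_op:
  assumes G: "generated_by_A \<theta> T" and I: "invariant_dist T M" and h: "C2_01 h h1 h2"
  shows "(LINT x:{0..1}|M. A_op \<theta> h h1 h2 x) = 0"
proof -
  have M: "dist01 M" using I unfolding invariant_dist_def by simp
  let ?\<Phi> = "\<lambda>f. LINT x:{0..1}|M. f x"
  have \<Phi>: "linear_contraction01 ?\<Phi>" by (rule linear_contraction01_set_integral[OF M])
  have feller: "feller_semigroup01 T" by (rule generated_by_A_feller[OF G])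
  note hc = C2_01_continuous[OF h]
  have Ah: "continuous_on {0..1} (A_op \<theta> h h1 h2)"
    unfolding A_op_def using hc by (intro continuous_intros) auto
  have "\<bar>?\<Phi> (A_op \<theta> h h1 h2)\<bar> \<le> sup_dist01 (\<lambda>x. (T s h x - h x) / s) (A_op \<theta> h h1 h2)"
    if s: "s > 0" for s
  proof -
    have Tsh: "continuous_on {0..1} (T s h)" using feller_continuous[OF feller] s hc(1) by simp
    have quot: "continuous_on {0..1} (\<lambda>x. (T s h x - h x) / s)"
      using Tsh hc(1) s by (intro continuous_intros) auto
    have "?\<Phi> (\<lambda>x. (T s h x - h x) / s) = (?\<Phi> (T s h) - ?\<Phi> h) / s"
      using dist01_set_integrable[OF M Tsh] dist01_set_integrable[OF M hc(1)] by simp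
    also have "?\<Phi> (T s h) = ?\<Phi> h"
      using I hc(1) s unfolding invariant_dist_def by simp
    finally have "?\<Phi> (\<lambda>x. (T s h x - h x) / s - A_op \<theta> h h1 h2 x) = - ?\<Phi> (A_op \<theta> h h1 h2)"
      using linear_contraction01_diff[OF \<Phi> quot Ah] by simp
    moreover have "\<bar>?\<Phi> (\<lambda>x. (T s h x - h x) / s - A_op \<theta> h h1 h2 x)\<bar>
        \<le> sup_dist01 (\<lambda>x. (T s h x - h x) / s) (A_op \<theta> h h1 h2)"
      using quot Ah sup_dist01_upper[OF quot Ah]
      by (intro linear_contraction01_bound[OF \<Phi>] continuous_on_diff) auto
    ultimately show ?thesis by simp
  qed
  then have "\<bar>?\<Phi> (A_op \<theta> h h1 h2)\<bar> \<le> 0"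
    by (intro tendsto_lowerbound[OF generated_by_A_tendsto[OF G h]])
      (auto simp: eventually_at_right_field intro: exI[of _ 1])
  then show ?thesis by simp
qed

lemma moment_recursion_if_invariant:
  assumes G: "generated_by_A \<theta> T" and I: "invariant_dist T M"
  shows "moment_recursion \<theta> M"
  unfolding moment_recursion_def
proof
  fix n
  have M: "dist01 M" using I unfolding invariant_dist_def by simp
  note \<Phi> = linear_contraction01_set_integral[OF M]
  have "0 = (LINT x:{0..1}|M. (real n + 2) * (real n + 1) * x ^ n - (real n + 2) * (real n + 1 + \<theta>) * x ^ Suc n)"
    using invariant_integral_A_op[OF G I C2_01_power[of n]] unfolding A_op_power by simp
  also have "\<dots> = (real n + 2) * (real n + 1) * moment M n - (real n + 2) * (real n + 1 + \<theta>) * moment M (Suc n)"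
    unfolding moment_def
    by (simp add: linear_contraction01_diff[OF \<Phi>] linear_contraction01_cmult[OF \<Phi>] continuous_intros)
  finally have "(real n + 2) * ((real (Suc n) + \<theta>) * moment M (Suc n)) =
      (real n + 2) * (real (Suc n) * moment M n)"
    by (simp add: algebra_simps)
  then show "(real (Suc n) + \<theta>) * moment M (Suc n) = real (Suc n) * moment M n"
    by (simp del: of_nat_Suc)
qed

lemma linear_ode_zero:
  fixes \<psi> :: "real \<Rightarrow> real"
  assumes deriv: "\<And>t. t \<ge> 0 \<Longrightarrow> (\<psi> has_real_derivative - c * \<psi> t) (at t within {0..})"
    and init: "\<psi> 0 = 0" and t: "t \<ge> 0"
  shows "\<psi> t = 0"
proof -
  have "\<exists>k. \<forall>x\<in>{0..}. exp (c * x) * \<psi> x = k"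
  proof (rule has_field_derivative_zero_constant)
    fix x :: real assume "x \<in> {0..}"
    then show "((\<lambda>x. exp (c * x) * \<psi> x) has_real_derivative 0) (at x within {0..})"
      using deriv by (auto intro!: derivative_eq_intros simp: algebra_simps)
  qed (rule convex_real_interval)
  then obtain k where "\<And>x. x \<ge> 0 \<Longrightarrow> exp (c * x) * \<psi> x = k" by auto
  from this[of 0] this[OF t] init show ?thesis by simp
qed

lemma feller_integral_power:
  assumes G: "generated_by_A \<theta> T" and M: "dist01 M" and rec: "moment_recursion \<theta> M"
    and t: "t \<ge> 0"
  shows "(LINT x:{0..1}|M. T t (\<lambda>z. z ^ n) x) = moment M n"
  using t
proof (induction n arbitrary: t)
  case 0
  have feller: "feller_semigroup01 T" by (rule generated_by_A_feller[OF G])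
  have "(LINT x:{0..1}|M. T t (\<lambda>_. 1) x) = (LINT x:{0..1}|M. 1)"
    using feller_const_one[OF feller 0] by (intro set_lebesgue_integral_cong dist01_sets_Icc M) auto
  then show ?case using M by (simp add: moment_def dist01_set_integral_const)
next
  case (Suc n)
  have feller: "feller_semigroup01 T" by (rule generated_by_A_feller[OF G])
  define a where "a = (real n + 2) * (real n + 1)"
  define c where "c = (real n + 2) * (real n + 1 + \<theta>)"
  define \<psi> where "\<psi> u = (LINT x:{0..1}|M. T u (\<lambda>z. z ^ Suc n) x) - moment M (Suc n)" for u
  have rec_n: "a * moment M n = c * moment M (Suc n)"
    using rec unfolding moment_recursion_def a_def c_def
    by (metis (no_types) add.commute mult.assoc of_nat_Suc)
  have "(\<psi> has_real_derivative - c * \<psi> u) (at u within {0..})" if u: "u \<ge> 0" for u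
  proof -
    let ?\<Phi> = "\<lambda>f. LINT x:{0..1}|M. T u f x"
    have \<Phi>: "linear_contraction01 ?\<Phi>" by (rule linear_contraction01_feller_integral[OF feller M u])
    have "(?\<Phi> (\<lambda>z. a * z ^ n - c * z ^ Suc n)) = a * ?\<Phi> (\<lambda>z. z ^ n) - c * ?\<Phi> (\<lambda>z. z ^ Suc n)"
      by (simp add: linear_contraction01_diff[OF \<Phi>] linear_contraction01_cmult[OF \<Phi>] continuous_intros)
    also have "\<dots> = - c * \<psi> u"
      using Suc.IH[OF u] rec_n unfolding \<psi>_def by (simp add: algebra_simps)
    finally have "?\<Phi> (\<lambda>z. a * z ^ n - c * z ^ Suc n) = - c * \<psi> u" .
    moreover have "((\<lambda>u. LINT x:{0..1}|M. T u (\<lambda>z. z ^ Suc n) x) has_real_derivative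
        ?\<Phi> (\<lambda>z. a * z ^ n - c * z ^ Suc n)) (at u within {0..})"
      using generated_by_A_tendsto[OF G C2_01_power[of n]] unfolding A_op_power a_def c_def
      by (intro feller_integral_has_derivative[OF feller M _ _ _ u] continuous_intros)
    ultimately show ?thesis
      unfolding \<psi>_def by (auto intro!: derivative_eq_intros)
  qed
  moreover have "\<psi> 0 = 0"
    unfolding \<psi>_def moment_def
    by (simp add: set_lebesgue_integral_cong[OF dist01_sets_Icc[OF M]] feller_zero[OF feller])
  ultimately show ?case using linear_ode_zero[of \<psi> c] Suc.prems unfolding \<psi>_def by simp
qed

lemma invariant_if_moment_recursion:
  assumes G: "generated_by_A \<theta> T" and M: "dist01 M" and rec: "moment_recursion \<theta> M"
  shows "invariant_dist T M"
  unfolding invariant_dist_def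
proof (intro conjI allI impI M)
  fix t :: real and f :: "real \<Rightarrow> real"
  assume t: "t \<ge> 0" and f: "continuous_on {0..1} f"
  show "(LINT x:{0..1}|M. T t f x) = (LINT x:{0..1}|M. f x)"
    using linear_contraction01_feller_integral[OF generated_by_A_feller[OF G] M t]
      linear_contraction01_set_integral[OF M] _ f
    by (rule linear_contraction01_eqI)
      (simp add: feller_integral_power[OF G M rec t] moment_def)
qed

lemma moment_zero: "dist01 M \<Longrightarrow> moment M 0 = 1"
  unfolding moment_def by (simp add: dist01_set_integral_const)

lemma moment_recursion_unique:
  assumes "\<theta> \<ge> 0" and M: "dist01 M" and N: "dist01 N"
    and "moment_recursion \<theta> M" "moment_recursion \<theta> N"
  shows "moment M n = moment N n"
proof (induction n)
  case 0
  show ?case using moment_zero[OF M] moment_zero[OF N] by simp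
next
  case (Suc n)
  have "(real (Suc n) + \<theta>) * moment M (Suc n) = (real (Suc n) + \<theta>) * moment N (Suc n)"
    using assms(4,5) Suc.IH unfolding moment_recursion_def by metis
  then show ?case using assms(1) by (simp del: of_nat_Suc)
qed

lemma dist01_real_distribution: "dist01 M \<Longrightarrow> real_distribution M"
  unfolding dist01_def real_distribution_def real_distribution_axioms_def by simp

lemma dist01_integral_eq_set_integral:
  fixes f :: "real \<Rightarrow> real"
  assumes M: "dist01 M" and f: "f \<in> borel_measurable borel"
  shows "integral\<^sup>L M f = (LINT x:{0..1}|M. f x)"
proof -
  interpret prob_space M using M unfolding dist01_def by blast
  have sets_M: "sets M = sets borel" using M unfolding dist01_def by blast
  have "measure M {0..1} = 1" using M unfolding dist01_def measure_def by simp
  then have "AE x in M. x \<in> {0..1}" by (rule AE_prob_1)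
  moreover have "f \<in> borel_measurable M" "(\<lambda>x. indicator {0..1} x *\<^sub>R f x) \<in> borel_measurable M"
    using f by (simp_all add: measurable_cong_sets[OF sets_M refl])
  ultimately show ?thesis
    unfolding set_lebesgue_integral_def by (intro integral_cong_AE) (auto simp: indicator_def)
qed

lemma (in real_distribution) char_eq_integral_cos_sin:
  "char M t = complex_of_real (expectation (\<lambda>x. cos (t * x))) +
     \<i> * complex_of_real (expectation (\<lambda>x. sin (t * x)))"
proof -
  have "integrable M (\<lambda>x. iexp (t * x))" by (rule integrable_iexp) auto
  then show ?thesis unfolding char_def
    by (intro complex_eqI) (simp_all add: integral_Re[symmetric] integral_Im[symmetric] Re_exp Im_exp)
qed

lemma dist01_eqI_moments:
  assumes M: "dist01 M" and N: "dist01 N" and moments: "\<And>n. moment M n = moment N n"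
  shows "M = N"
proof (rule Levy_uniqueness[OF dist01_real_distribution[OF M] dist01_real_distribution[OF N]])
  have integral_eq: "integral\<^sup>L M f = integral\<^sup>L N f" if f: "continuous_on UNIV f" for f :: "real \<Rightarrow> real"
  proof -
    have "(LINT x:{0..1}|M. f x) = (LINT x:{0..1}|N. f x)"
      by (rule linear_contraction01_eqI[OF linear_contraction01_set_integral[OF M]
            linear_contraction01_set_integral[OF N] _ continuous_on_subset[OF f subset_UNIV]])
        (use moments in \<open>simp add: moment_def\<close>)
    then show ?thesis
      using f by (simp add: dist01_integral_eq_set_integral[OF M] dist01_integral_eq_set_integral[OF N]
          borel_measurable_continuous_onI)
  qed
  show "char M = char N"
  proof
    fix t :: real
    show "char M t = char N t"
      using integral_eq[of "\<lambda>x. cos (t * x)"] integral_eq[of "\<lambda>x. sin (t * x)"]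
        real_distribution.char_eq_integral_cos_sin[OF dist01_real_distribution[OF M]]
        real_distribution.char_eq_integral_cos_sin[OF dist01_real_distribution[OF N]]
      by (simp add: continuous_intros)
  qed
qed

text \<open>For \<open>n = 0\<close> the truncated exponent \<open>n - 1\<close> is harmless: that term has coefficient \<open>0\<close>.\<close>
lemma beta_integration_by_parts:
  fixes \<theta> :: real
  assumes \<theta>: "\<theta> > 0"
  shows "((\<lambda>z. (1 - z) powr (\<theta> - 1) * ((real n + \<theta>) * z ^ n - real n * z ^ (n - 1)))
           has_integral 0 ^ n) {0..1}"
proof -
  define F where "F z = - (z ^ n * (1 - z) powr \<theta>)" for z :: real
  have "continuous_on {0..1} F"
    unfolding F_def by (intro continuous_intros continuous_on_powr') (use \<theta> in auto)
  moreover have "(F has_vector_derivative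
      (1 - x) powr (\<theta> - 1) * ((real n + \<theta>) * x ^ n - real n * x ^ (n - 1))) (at x)"
    if x: "x \<in> {0<..<1}" for x
  proof -
    have "((\<lambda>z. (1 - z) powr \<theta>) has_real_derivative \<theta> * (1 - x) powr (\<theta> - 1) * (- 1)) (at x)"
      using DERIV_fun_powr[of "\<lambda>z. 1 - z" "- 1" x \<theta>] x by (auto intro!: derivative_eq_intros)
    from DERIV_minus[OF DERIV_mult[OF DERIV_pow this]]
    have deriv: "(F has_real_derivative
        - (real n * x ^ (n - 1) * (1 - x) powr \<theta> + \<theta> * (1 - x) powr (\<theta> - 1) * (- 1) * x ^ n)) (at x)"
      unfolding F_def by simp
    have pw: "(1 - x) powr \<theta> = (1 - x) * (1 - x) powr (\<theta> - 1)"
      using x by (simp add: powr_diff)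
    have eq: "- (real n * x ^ (n - 1) * (1 - x) powr \<theta> + \<theta> * (1 - x) powr (\<theta> - 1) * (- 1) * x ^ n)
        = (1 - x) powr (\<theta> - 1) * ((real n + \<theta>) * x ^ n - real n * x ^ (n - 1))"
      unfolding pw by (cases n) (simp_all add: algebra_simps)
    show ?thesis
      using deriv unfolding eq has_real_derivative_iff_has_vector_derivative .
  qed
  ultimately have "((\<lambda>z. (1 - z) powr (\<theta> - 1) * ((real n + \<theta>) * z ^ n - real n * z ^ (n - 1)))
      has_integral F 1 - F 0) {0..1}"
    by (intro fundamental_theorem_of_calculus_interior) auto
  moreover have "F 1 - F 0 = 0 ^ n" unfolding F_def using \<theta> by (cases n) auto
  ultimately show ?thesis by simp
qed

definition beta_density :: "real \<Rightarrow> real \<Rightarrow> real" where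
  "beta_density \<theta> z = indicator {0..1} z * (\<theta> * (1 - z) powr (\<theta> - 1))"

lemma beta1_eq_density: "\<theta> \<noteq> 0 \<Longrightarrow> beta1 \<theta> = density lborel (\<lambda>z. ennreal (beta_density \<theta> z))"
  unfolding beta1_def beta_density_def by simp

lemma borel_measurable_beta_density [measurable]: "beta_density \<theta> \<in> borel_measurable borel"
  unfolding beta_density_def by measurable

lemma beta_density_nonneg: "\<theta> \<ge> 0 \<Longrightarrow> beta_density \<theta> z \<ge> 0"
  unfolding beta_density_def by (simp add: indicator_def)

lemma beta_density_has_integral:
  assumes \<theta>: "\<theta> > 0"
  shows "((\<lambda>z. beta_density \<theta> z * ((real n + \<theta>) * z ^ n - real n * z ^ (n - 1))) has_integral \<theta> * 0 ^ n) UNIV"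
proof -
  have "((\<lambda>z. \<theta> * ((1 - z) powr (\<theta> - 1) * ((real n + \<theta>) * z ^ n - real n * z ^ (n - 1))))
      has_integral \<theta> * 0 ^ n) {0..1}"
    using beta_integration_by_parts[OF \<theta>, of n] by (rule has_integral_mult_right)
  then have "((\<lambda>z. if z \<in> {0..1} then \<theta> * ((1 - z) powr (\<theta> - 1) * ((real n + \<theta>) * z ^ n - real n * z ^ (n - 1))) else 0)
      has_integral \<theta> * 0 ^ n) UNIV"
    by (rule has_integral_restrict_UNIV[THEN iffD2])
  moreover have "(\<lambda>z. if z \<in> {0..1} then \<theta> * ((1 - z) powr (\<theta> - 1) * ((real n + \<theta>) * z ^ n - real n * z ^ (n - 1))) else 0)
      = (\<lambda>z. beta_density \<theta> z * ((real n + \<theta>) * z ^ n - real n * z ^ (n - 1)))"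
    by (simp add: beta_density_def fun_eq_iff)
  ultimately show ?thesis by simp
qed

lemma integrable_beta_density:
  assumes \<theta>: "\<theta> > 0"
  shows "integrable lborel (beta_density \<theta>)" "(\<integral>\<^sup>+ z. beta_density \<theta> z \<partial>lborel) = 1"
proof -
  have "(beta_density \<theta> has_integral 1) UNIV"
    using beta_density_has_integral[OF \<theta>, of 0] \<theta>
    by (simp add: mult.commute has_integral_mult_right_iff)
  then show "(\<integral>\<^sup>+ z. beta_density \<theta> z \<partial>lborel) = 1"
    using nn_integral_has_integral_lborel[of "beta_density \<theta>"] \<theta> by (simp add: beta_density_nonneg)
  then show "integrable lborel (beta_density \<theta>)"
    using \<theta> by (intro integrableI_nonneg) (auto simp: beta_density_nonneg)
qed

lemma integrable_beta_density_power:
  assumes \<theta>: "\<theta> > 0"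
  shows "integrable lborel (\<lambda>z. beta_density \<theta> z * z ^ n)"
proof (rule Bochner_Integration.integrable_bound[OF integrable_beta_density(1)[OF \<theta>]])
  show "AE z in lborel. norm (beta_density \<theta> z * z ^ n) \<le> norm (beta_density \<theta> z)"
    by (intro AE_I2) (auto simp: beta_density_def indicator_def abs_mult intro!: mult_left_le power_le_one)
qed simp

lemma dist01_beta1:
  assumes "\<theta> \<ge> 0"
  shows "dist01 (beta1 \<theta>)"
proof (cases "\<theta> = 0")
  case True
  then show ?thesis
    unfolding dist01_def beta1_def by (auto intro!: prob_space_return simp: emeasure_return)
next
  case False
  then have \<theta>: "\<theta> > 0" using assms by simp
  have mass: "emeasure (beta1 \<theta>) A = 1" if A: "A = UNIV \<or> A = {0..1}" for A
  proof -
    have "emeasure (beta1 \<theta>) A = (\<integral>\<^sup>+ z. ennreal (beta_density \<theta> z) * indicator A z \<partial>lborel)"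
      using A by (auto simp: beta1_eq_density False emeasure_density)
    also have "\<dots> = (\<integral>\<^sup>+ z. beta_density \<theta> z \<partial>lborel)"
      using A by (intro nn_integral_cong) (auto simp: beta_density_def indicator_def)
    finally show ?thesis using integrable_beta_density(2)[OF \<theta>] by simp
  qed
  have "prob_space (beta1 \<theta>)"
    by (rule prob_spaceI) (use mass in \<open>simp add: beta1_eq_density False\<close>)
  then show ?thesis
    unfolding dist01_def using mass by (simp add: beta1_eq_density False)
qed

lemma moment_beta1:
  assumes \<theta>: "\<theta> > 0"
  shows "moment (beta1 \<theta>) n = integral\<^sup>L lborel (\<lambda>z. beta_density \<theta> z * z ^ n)"
proof -
  have "moment (beta1 \<theta>) n = integral\<^sup>L lborel (\<lambda>z. beta_density \<theta> z *\<^sub>R (indicator {0..1} z *\<^sub>R z ^ n))"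
    unfolding moment_def set_lebesgue_integral_def beta1_eq_density[OF less_imp_neq[OF \<theta>, symmetric]] using \<theta>
    by (intro integral_density) (auto simp: beta_density_nonneg)
  also have "\<dots> = integral\<^sup>L lborel (\<lambda>z. beta_density \<theta> z * z ^ n)"
    by (intro Bochner_Integration.integral_cong) (auto simp: beta_density_def indicator_def)
  finally show ?thesis .
qed

lemma moment_recursion_beta1:
  assumes "\<theta> \<ge> 0"
  shows "moment_recursion \<theta> (beta1 \<theta>)"
proof (cases "\<theta> = 0")
  case True
  have "beta1 0 = return borel 1" unfolding beta1_def by simp
  then have "moment (beta1 0) n = 1" for n
    unfolding moment_def set_lebesgue_integral_def by (simp add: integral_return)
  then show ?thesis using True unfolding moment_recursion_def by simp
next
  case False
  then have \<theta>: "\<theta> > 0" using assms by simp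
  show ?thesis unfolding moment_recursion_def
  proof
    fix n
    define I where "I k = integral\<^sup>L lborel (\<lambda>z. beta_density \<theta> z * z ^ k)" for k
    have "((\<lambda>z. (real (Suc n) + \<theta>) * (beta_density \<theta> z * z ^ Suc n) - real (Suc n) * (beta_density \<theta> z * z ^ n))
        has_integral (real (Suc n) + \<theta>) * I (Suc n) - real (Suc n) * I n) UNIV"
      unfolding I_def
      by (intro has_integral_diff has_integral_mult_right has_integral_integral_lborel
          integrable_beta_density_power \<theta>)
    moreover have "((\<lambda>z. (real (Suc n) + \<theta>) * (beta_density \<theta> z * z ^ Suc n) - real (Suc n) * (beta_density \<theta> z * z ^ n))
        has_integral 0) UNIV"
      using beta_density_has_integral[OF \<theta>, of "Suc n"] by (simp add: algebra_simps)
    ultimately have "(real (Suc n) + \<theta>) * I (Suc n) - real (Suc n) * I n = 0"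
      by (rule has_integral_unique)
    then show "(real (Suc n) + \<theta>) * moment (beta1 \<theta>) (Suc n) = real (Suc n) * moment (beta1 \<theta>) n"
      unfolding moment_beta1[OF \<theta>] I_def by simp
  qed
qed

theorem mainTheorem9:
  fixes \<theta> :: real and T :: "real \<Rightarrow> (real \<Rightarrow> real) \<Rightarrow> (real \<Rightarrow> real)"
  assumes "\<theta> \<ge> 0"
    and "generated_by_A \<theta> T"
  shows "invariant_dist T (beta1 \<theta>) \<and> (\<forall>M. invariant_dist T M \<longrightarrow> M = beta1 \<theta>)"
proof (intro conjI allI impI)
  show "invariant_dist T (beta1 \<theta>)"
    by (rule invariant_if_moment_recursion[OF assms(2) dist01_beta1[OF assms(1)]
          moment_recursion_beta1[OF assms(1)]])
next
  fix M
  assume invariant: "invariant_dist T M"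
  then have M: "dist01 M" unfolding invariant_dist_def by simp
  show "M = beta1 \<theta>"
  proof (rule dist01_eqI_moments[OF M dist01_beta1[OF assms(1)]])
    fix n
    show "moment M n = moment (beta1 \<theta>) n"
      by (rule moment_recursion_unique[OF assms(1) M dist01_beta1[OF assms(1)]
            moment_recursion_if_invariant[OF assms(2) invariant] moment_recursion_beta1[OF assms(1)]])
  qed
qed

end
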